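(* If $n\ge2$, then $$b_n(y;-t,t,t)=(-1)^n2^{n-2}t^{n-1}(y-1)y.$$ In particular, for $n\ge2$ the statistic on $I_n$ recording the number of levels is balanced, i.e. the number of members of $I_n$ with an even number of levels equals the number with an odd number of levels.
   Context: An inversion sequence of length $n$ is a sequence $\rho=\rho_1\cdots\rho_n$ of integers with $1\le \rho_i\le i$ for all $i$; $I_n$ is the set of them and $I_{n,i}$ those with last letter $i$. A level, descent, or ascent of $\rho$ is an index $i\in[n-1]$ with $\rho_i=\rho_{i+1}$, $\rho_i>\rho_{i+1}$, or $\rho_i<\rho_{i+1}$, respectively. Define $b_n(y;p,q,r)=\sum_{i=1}^n y^i\sum_{\rho\in I_{n,i}}p^{\mathrm{lev}(\rho)}q^{\mathrm{des}(\rho)}r^{\mathrm{asc}(\rho)}$. *)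

theory Defs
  imports Main
begin

text \<open>Inversion sequences of length n: lists rho of length n with 1 <= rho_i <= i,
  where the 1-based entry rho_i is stored at list index i-1.\<close>
definition inv_seqs :: "nat \<Rightarrow> nat list set" where
  "inv_seqs n = {rho. length rho = n \<and> (\<forall>i<n. 1 \<le> rho ! i \<and> rho ! i \<le> i + 1)}"

definition inv_seqs_last :: "nat \<Rightarrow> nat \<Rightarrow> nat list set" where
  "inv_seqs_last n i = {rho \<in> inv_seqs n. last rho = i}"

definition lev :: "nat list \<Rightarrow> nat" where
  "lev rho = card {i. i + 1 < length rho \<and> rho ! i = rho ! (i + 1)}"

definition des :: "nat list \<Rightarrow> nat" where
  "des rho = card {i. i + 1 < length rho \<and> rho ! i > rho ! (i + 1)}"

definition asc :: "nat list \<Rightarrow> nat" where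
  "asc rho = card {i. i + 1 < length rho \<and> rho ! i < rho ! (i + 1)}"

definition b_poly :: "nat \<Rightarrow> 'a::comm_ring_1 \<Rightarrow> 'a \<Rightarrow> 'a \<Rightarrow> 'a \<Rightarrow> 'a" where
  "b_poly n y p q r =
     (\<Sum>i = 1..n. y ^ i * (\<Sum>rho \<in> inv_seqs_last n i. p ^ lev rho * q ^ des rho * r ^ asc rho))"

end

theory Submission
  imports Defs
begin

text \<open>At \<open>p = -t\<close>, \<open>q = r = t\<close> an inversion sequence of length \<open>n\<close> has weight
  \<open>(-1)^lev * t^(n-1)\<close>, so only the signed level counts \<open>signed_lev_last n j\<close> (by last letter) matter.
  Appending \<open>j\<close> to \<open>xs\<close> creates a level exactly when \<open>j = last xs\<close>; hence
  \<open>signed_lev_last (n+1) j = signed_lev n - 2 * signed_lev_last n j\<close> for \<open>1 \<le> j \<le> n+1\<close>, and summing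
  over \<open>j\<close> gives \<open>signed_lev (n+1) = (n-1) * signed_lev n\<close>. So \<open>signed_lev n = 0\<close> for \<open>n \<ge> 2\<close>,
  which is the balance statement, and from then on \<open>signed_lev_last\<close> is just multiplied by \<open>-2\<close>,
  starting from the values \<open>-1\<close> and \<open>1\<close> at \<open>j = 1\<close> and \<open>j = 2\<close> for \<open>n = 2\<close>.\<close>

lemma finite_inv_seqs: "finite (inv_seqs n)"
proof (rule finite_subset)
  show "inv_seqs n \<subseteq> {xs. set xs \<subseteq> {0..n} \<and> length xs = n}"
    by (auto simp: inv_seqs_def in_set_conv_nth) (meson Suc_leI le_trans)
  show "finite {xs. set xs \<subseteq> {0..n} \<and> length xs = n}"
    by (rule finite_lists_length_eq) simp
qed

lemma last_inv_seqs:
  assumes "rho \<in> inv_seqs n" "n \<ge> 1"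
  shows "rho \<noteq> []" "last rho \<in> {1..n}"
proof -
  have len: "length rho = n" and bounds: "\<forall>i<n. 1 \<le> rho ! i \<and> rho ! i \<le> i + 1"
    using assms(1) by (simp_all add: inv_seqs_def)
  then show "rho \<noteq> []" using assms(2) by auto
  then have "last rho = rho ! (n - 1)" using len by (simp add: last_conv_nth)
  then show "last rho \<in> {1..n}" using bounds[rule_format, of "n - 1"] assms(2) by simp
qed

lemma inv_seqs_last_Suc:
  assumes "j \<in> {1..Suc n}"
  shows "inv_seqs_last (Suc n) j = (\<lambda>xs. xs @ [j]) ` inv_seqs n"
proof
  show "inv_seqs_last (Suc n) j \<subseteq> (\<lambda>xs. xs @ [j]) ` inv_seqs n"
  proof
    fix rho assume rho: "rho \<in> inv_seqs_last (Suc n) j"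
    then have len: "length rho = Suc n" by (simp add: inv_seqs_last_def inv_seqs_def)
    moreover have "last rho = j" using rho by (simp add: inv_seqs_last_def)
    ultimately have "rho = butlast rho @ [j]"
      by (metis append_butlast_last_id list.size(3) nat.distinct(1))
    moreover have "butlast rho \<in> inv_seqs n"
      using rho len by (auto simp: inv_seqs_last_def inv_seqs_def nth_butlast)
    ultimately show "rho \<in> (\<lambda>xs. xs @ [j]) ` inv_seqs n" by blast
  qed
  show "(\<lambda>xs. xs @ [j]) ` inv_seqs n \<subseteq> inv_seqs_last (Suc n) j"
    using assms by (auto simp: inv_seqs_last_def inv_seqs_def nth_append less_Suc_eq)
qed

lemma lev_snoc:
  assumes "xs \<noteq> []"
  shows "lev (xs @ [j]) = lev xs + (if last xs = j then 1 else 0)"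
proof -
  let ?L = "{i. i + 1 < length xs \<and> xs ! i = xs ! (i + 1)}"
  have "finite ?L" by (rule finite_subset[of _ "{..<length xs}"]) auto
  moreover have "length xs - 1 \<notin> ?L" by auto
  moreover have "{i. i + 1 < length (xs @ [j]) \<and> (xs @ [j]) ! i = (xs @ [j]) ! (i + 1)}
      = ?L \<union> {i. i + 1 = length xs \<and> xs ! i = j}"
    by (auto simp: nth_append less_Suc_eq)
  moreover have "{i. i + 1 = length xs \<and> xs ! i = j} = (if last xs = j then {length xs - 1} else {})"
    using assms by (auto simp: last_conv_nth dest: sym)
  ultimately show ?thesis by (simp add: lev_def)
qed

lemma lev_des_asc_sum: "lev rho + des rho + asc rho = length rho - 1"
proof -
  let ?L = "{i. i + 1 < length rho \<and> rho ! i = rho ! (i + 1)}"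
  let ?D = "{i. i + 1 < length rho \<and> rho ! i > rho ! (i + 1)}"
  let ?A = "{i. i + 1 < length rho \<and> rho ! i < rho ! (i + 1)}"
  have fin: "finite ?L" "finite ?D" "finite ?A"
    by (rule finite_subset[of _ "{..<length rho}"], auto)+
  have "?L \<union> ?D \<union> ?A = {..<length rho - 1}" by auto
  moreover have "card (?L \<union> ?D \<union> ?A) = card ?L + card ?D + card ?A"
    using fin by (simp add: card_Un_disjoint disjoint_iff)
  ultimately show ?thesis by (simp add: lev_def des_def asc_def)
qed

lemma lev_des_asc_weight:
  fixes t :: "'a::comm_ring_1"
  shows "(- t) ^ lev rho * t ^ des rho * t ^ asc rho = (-1) ^ lev rho * t ^ (length rho - 1)"
  unfolding lev_des_asc_sum[symmetric] by (simp only: power_minus[of t] power_add mult.assoc)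

definition signed_lev :: "nat \<Rightarrow> int" where
  "signed_lev n = (\<Sum>rho\<in>inv_seqs n. (-1) ^ lev rho)"

definition signed_lev_last :: "nat \<Rightarrow> nat \<Rightarrow> int" where
  "signed_lev_last n j = (\<Sum>rho\<in>inv_seqs_last n j. (-1) ^ lev rho)"

lemma signed_lev_last_eq_sum_if:
  "signed_lev_last n j = (\<Sum>rho\<in>inv_seqs n. if last rho = j then (-1) ^ lev rho else 0)"
  unfolding signed_lev_last_def inv_seqs_last_def by (rule sum.inter_filter[OF finite_inv_seqs])

lemma signed_lev_last_out_of_range:
  assumes "n \<ge> 1" "j \<notin> {1..n}"
  shows "signed_lev_last n j = 0"
proof -
  have "inv_seqs_last n j = {}"
    using last_inv_seqs(2)[OF _ assms(1)] assms(2) by (auto simp: inv_seqs_last_def)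
  then show ?thesis by (simp add: signed_lev_last_def)
qed

lemma signed_lev_eq_sum_last:
  assumes "n \<ge> 1"
  shows "signed_lev n = (\<Sum>j=1..n. signed_lev_last n j)"
  unfolding signed_lev_def signed_lev_last_def inv_seqs_last_def
  using last_inv_seqs(2)[OF _ assms] by (intro sum.group[symmetric] finite_inv_seqs) auto

lemma signed_lev_last_Suc:
  assumes "n \<ge> 1" "j \<in> {1..Suc n}"
  shows "signed_lev_last (Suc n) j = signed_lev n - 2 * signed_lev_last n j"
proof -
  have "signed_lev_last (Suc n) j = (\<Sum>xs\<in>inv_seqs n. (-1) ^ lev (xs @ [j]))"
    unfolding signed_lev_last_def inv_seqs_last_Suc[OF assms(2)]
    by (rule sum.reindex_cong[where l = "\<lambda>xs. xs @ [j]"]) (auto simp: inj_on_def)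
  also have "\<dots> = (\<Sum>xs\<in>inv_seqs n. (-1) ^ lev xs - 2 * (if last xs = j then (-1) ^ lev xs else 0))"
    using last_inv_seqs(1)[OF _ assms(1)] by (intro sum.cong) (auto simp: lev_snoc)
  also have "\<dots> = signed_lev n - 2 * signed_lev_last n j"
    by (simp add: signed_lev_def signed_lev_last_eq_sum_if sum_subtractf sum_distrib_left)
  finally show ?thesis .
qed

lemma signed_lev_Suc:
  assumes "n \<ge> 1"
  shows "signed_lev (Suc n) = (int n - 1) * signed_lev n"
proof -
  have "signed_lev (Suc n) = (\<Sum>j=1..Suc n. signed_lev n - 2 * signed_lev_last n j)"
    using assms by (simp add: signed_lev_eq_sum_last signed_lev_last_Suc)
  also have "\<dots> = int (Suc n) * signed_lev n - 2 * (\<Sum>j=1..n. signed_lev_last n j)"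
    using signed_lev_last_out_of_range[OF assms, of "Suc n"]
    by (simp add: sum_subtractf sum_distrib_left)
  also have "\<dots> = (int n - 1) * signed_lev n"
    using assms by (simp add: signed_lev_eq_sum_last algebra_simps)
  finally show ?thesis .
qed

lemma inv_seqs_One: "inv_seqs 1 = {[1]}"
  by (auto simp: inv_seqs_def length_Suc_conv)

lemma signed_lev_One: "signed_lev 1 = 1"
  unfolding signed_lev_def inv_seqs_One by (simp add: lev_def)

lemma signed_lev_last_One: "signed_lev_last 1 j = (if j = 1 then 1 else 0)"
  unfolding signed_lev_last_eq_sum_if inv_seqs_One by (simp add: lev_def)

lemma signed_lev_eq_0:
  assumes "n \<ge> 2"
  shows "signed_lev n = 0"
  using assms
proof (induction n rule: nat_induct_at_least)
  case base
  show ?case using signed_lev_Suc[of 1] unfolding Suc_1 by simp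
next
  case (Suc n)
  then show ?case using signed_lev_Suc[of n] by simp
qed

lemma signed_lev_last_closed_form:
  assumes "n \<ge> 2"
  shows "signed_lev_last n j = (-2) ^ (n - 2) * (if j = 2 then 1 else if j = 1 then -1 else 0)"
  using assms
proof (induction n arbitrary: j rule: nat_induct_at_least)
  case base
  show ?case
  proof (cases "j \<in> {1..2}")
    case True
    then have "signed_lev_last 2 j = signed_lev 1 - 2 * signed_lev_last 1 j"
      using signed_lev_last_Suc[of 1 j] unfolding Suc_1 by simp
    then show ?thesis using True unfolding signed_lev_One signed_lev_last_One by auto
  next
    case False
    then show ?thesis using signed_lev_last_out_of_range[of 2 j] by auto
  qed
next
  case (Suc n)
  show ?case
  proof (cases "j \<in> {1..Suc n}")
    case True
    then have "signed_lev_last (Suc n) j = -2 * signed_lev_last n j"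
      using Suc.hyps signed_lev_last_Suc[of n j] signed_lev_eq_0[of n] by simp
    moreover have "(-2::int) ^ (Suc n - 2) = -2 * (-2) ^ (n - 2)"
      using Suc.hyps by (metis Suc_diff_le power_Suc)
    ultimately show ?thesis using Suc.IH[of j] by (metis mult.assoc)
  next
    case False
    then show ?thesis using Suc signed_lev_last_out_of_range[of "Suc n" j] by auto
  qed
qed

lemma signed_lev_eq_card_diff:
  "signed_lev n
    = int (card {rho \<in> inv_seqs n. even (lev rho)}) - int (card {rho \<in> inv_seqs n. odd (lev rho)})"
proof -
  have "signed_lev n = (\<Sum>rho\<in>inv_seqs n. if even (lev rho) then 1 else - 1)"
    unfolding signed_lev_def by (simp add: minus_one_power_iff)
  also have "\<dots>
      = int (card {rho \<in> inv_seqs n. even (lev rho)}) - int (card {rho \<in> inv_seqs n. odd (lev rho)})"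
    by (simp add: sum.If_cases[OF finite_inv_seqs] Int_def Compl_eq set_diff_eq)
  finally show ?thesis .
qed

lemma b_poly_eq_signed_lev_last:
  fixes y t :: "'a::comm_ring_1"
  shows "b_poly n y (- t) t t = t ^ (n - 1) * (\<Sum>i=1..n. y ^ i * of_int (signed_lev_last n i))"
proof -
  have "(\<Sum>rho\<in>inv_seqs_last n i. (- t) ^ lev rho * t ^ des rho * t ^ asc rho)
      = of_int (signed_lev_last n i) * t ^ (n - 1)" for i
    unfolding signed_lev_last_def of_int_sum sum_distrib_right
    by (rule sum.cong) (auto simp: lev_des_asc_weight inv_seqs_last_def inv_seqs_def)
  then show ?thesis unfolding b_poly_def by (simp add: sum_distrib_left mult_ac)
qed

lemma sum_signed_lev_last_weighted:
  fixes y :: "'a::comm_ring_1"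
  assumes "n \<ge> 2"
  shows "(\<Sum>i=1..n. y ^ i * of_int (signed_lev_last n i)) = of_int ((-2) ^ (n - 2)) * (y\<^sup>2 - y)"
proof -
  have "(\<Sum>i=1..n. y ^ i * of_int (signed_lev_last n i))
      = (\<Sum>i\<in>{1,2}. y ^ i * of_int (signed_lev_last n i))"
    using assms by (intro sum.mono_neutral_right) (auto simp: signed_lev_last_closed_form)
  then show ?thesis
    using assms by (simp add: signed_lev_last_closed_form algebra_simps power2_eq_square)
qed

theorem proposition3p8:
  fixes n :: nat and y t :: "'a::comm_ring_1"
  assumes "n \<ge> 2"
  shows "b_poly n y (- t) t t = (-1) ^ n * 2 ^ (n - 2) * t ^ (n - 1) * (y - 1) * y
    \<and> card {rho \<in> inv_seqs n. even (lev rho)} = card {rho \<in> inv_seqs n. odd (lev rho)}"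
proof
  obtain m where n: "n = m + 2" using assms by (metis add.commute le_add_diff_inverse)
  have "b_poly n y (- t) t t = t ^ (n - 1) * (of_int ((-2) ^ (n - 2)) * (y\<^sup>2 - y))"
    unfolding b_poly_eq_signed_lev_last sum_signed_lev_last_weighted[OF assms] of_int_power by simp
  also have "\<dots> = (-1) ^ n * 2 ^ (n - 2) * t ^ (n - 1) * (y - 1) * y"
    by (simp add: n power_minus[of 2] algebra_simps power2_eq_square)
  finally show "b_poly n y (- t) t t = (-1) ^ n * 2 ^ (n - 2) * t ^ (n - 1) * (y - 1) * y" .
  show "card {rho \<in> inv_seqs n. even (lev rho)} = card {rho \<in> inv_seqs n. odd (lev rho)}"
    using signed_lev_eq_card_diff[of n] signed_lev_eq_0[OF assms] by simp
qed

end
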